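(* Let $t_1,\dots,t_k\in T$ be transpositions whose roots $\alpha_{t_1},\dots,\alpha_{t_k}$ are linearly independent, and fix $1\le i\le k$. Then there is a reflection order $\prec$ on $T$ such that: (i) $t_1\prec t_2\prec\cdots\prec t_k$; (ii) the set of $t\in T$ with $\alpha_t\in\mathrm{span}_{\mathbb{R}}(\alpha_{t_1},\dots,\alpha_{t_i})$ is an interval under $\prec$; (iii) if $t,t'\in T$ are such that $\alpha_t\in\mathrm{span}_{\mathbb{R}}(\alpha_{t_1},\dots,\alpha_{t_i})$ and $\alpha_{t'}\in\mathrm{span}_{\mathbb{R}}(\alpha_{t_1},\dots,\alpha_{t_k})\setminus\mathrm{span}_{\mathbb{R}}(\alpha_{t_1},\dots,\alpha_{t_i})$, then $t\prec t'$ provided the coefficients of $\alpha_{t_{i+1}},\dots,\alpha_{t_k}$ in $\alpha_{t'}$ are each non-negative.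
   Context: $T$ is the set of transpositions of $S_n$; for $t=(a\,b)$ with $a<b$ its root is $\alpha_t=e_a-e_b\in\mathbb{R}^n$. A reflection order is a total order $\prec$ on $T$ such that for all $1\le a<b<c\le n$ either $(a\,b)\prec(a\,c)\prec(b\,c)$ or $(b\,c)\prec(a\,c)\prec(a\,b)$. *)

theory Defs
  imports "HOL-Analysis.Analysis"
begin

text \<open>The ground set {1..n} is modelled by a finite linearly ordered type 'n
  (n = CARD('n)). A transposition (a b) with a < b is the pair (a, b).\<close>

definition transps :: "('n::{finite,linorder} \<times> 'n) set" where
  "transps = {(a, b). a < b}"

definition troot :: "('n::{finite,linorder} \<times> 'n::{finite,linorder}) \<Rightarrow> real ^ 'n::{finite,linorder}" where
  "troot t = axis (fst t) 1 - axis (snd t) 1"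

definition reflection_order :: "(('n::{finite,linorder} \<times> 'n::{finite,linorder}) \<Rightarrow> ('n::{finite,linorder} \<times> 'n::{finite,linorder}) \<Rightarrow> bool) \<Rightarrow> bool" where
  "reflection_order R \<longleftrightarrow>
     (\<forall>t\<in>transps. \<not> R t t) \<and>
     (\<forall>t\<in>transps. \<forall>u\<in>transps. \<forall>v\<in>transps. R t u \<longrightarrow> R u v \<longrightarrow> R t v) \<and>
     (\<forall>t\<in>transps. \<forall>u\<in>transps. t \<noteq> u \<longrightarrow> R t u \<or> R u t) \<and>
     (\<forall>a b c. a < b \<and> b < c \<longrightarrow>
        (R (a, b) (a, c) \<and> R (a, c) (b, c)) \<or> (R (b, c) (a, c) \<and> R (a, c) (a, b)))"

definition order_interval :: "(('n::{finite,linorder} \<times> 'n) \<Rightarrow> ('n \<times> 'n) \<Rightarrow> bool) \<Rightarrow> ('n \<times> 'n) set \<Rightarrow> bool" where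
  "order_interval R S \<longleftrightarrow>
     (\<forall>x\<in>S. \<forall>z\<in>S. \<forall>y\<in>transps. R x y \<longrightarrow> R y z \<longrightarrow> y \<in> S)"

end

theory Submission
  imports Defs "HOL-Library.Fun_Lexorder"
begin

text \<open>Order the transpositions lexicographically by their coordinate sequences
  n \<mapsto> \<phi>_n(\<alpha>_t) / ht(\<alpha>_t), where the \<phi>_n are linear functionals and
  ht(e_a - e_b) = b - a, breaking ties lexicographically in (a, b). Since
  \<alpha>_(a c) = \<alpha>_(a b) + \<alpha>_(b c) and ht is additive, the sequence of (a c) is a strict
  convex combination of those of (a b) and (b c), hence lies strictly between them; so every
  such order is a reflection order.

  The functionals are adapted to V_i = span(\<alpha>_t1, ..., \<alpha>_ti). \<phi>_0 vanishes on V_i and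
  equals j \<cdot> ht on \<alpha>_tj for j > i: this orders t_(i+1), ..., t_k and gives (iii), since
  \<phi>_0 is positive on non-negative combinations leaving V_i. Then \<phi>_1, ..., \<phi>_N vanish on
  V_i and jointly detect every root outside it, so the roots in V_i are exactly those whose
  first N + 1 coordinates vanish, which is an interval. Finally \<phi>_(N+1) equals j \<cdot> ht on
  \<alpha>_tj, ordering t_1, ..., t_i.\<close>

lemma less_fun_trichotomy_wellorder:
  fixes f g :: "'a::wellorder \<Rightarrow> 'b::linorder"
  shows "less_fun f g \<or> f = g \<or> less_fun g f"
proof (cases "f = g")
  case False
  then have "\<exists>k. f k \<noteq> g k" by (auto simp: fun_eq_iff)
  define k where "k = (LEAST k. f k \<noteq> g k)"
  have "f k \<noteq> g k"
    unfolding k_def using \<open>\<exists>k. f k \<noteq> g k\<close> by (rule LeastI_ex)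
  moreover have "f k' = g k'" if "k' < k" for k'
    using that not_less_Least unfolding k_def by blast
  ultimately have "less_fun f g \<or> less_fun g f"
    by (cases "f k < g k") (auto intro!: less_funI exI[of _ k])
  then show ?thesis by blast
qed simp

lemma less_fun_convex_combination:
  fixes u v :: "'a::linorder \<Rightarrow> real"
  assumes "less_fun u v" and p: "0 < p" and q: "0 < q"
  defines "w \<equiv> \<lambda>n. (p * u n + q * v n) / (p + q)"
  shows "less_fun u w" and "less_fun w v"
proof -
  obtain k where k: "u k < v k" and eq: "\<And>k'. k' < k \<Longrightarrow> u k' = v k'"
    using assms(1) by (blast elim!: less_funE)
  have w_u: "w n - u n = q * (v n - u n) / (p + q)"
    and v_w: "v n - w n = p * (v n - u n) / (p + q)" for n
    using p q by (simp_all add: w_def field_simps)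
  have "w k' = u k'" and "v k' = w k'" if "k' < k" for k'
    using w_u[of k'] v_w[of k'] eq[OF that] by simp_all
  moreover have "u k < w k" and "w k < v k"
  proof -
    have "0 < q * (v k - u k) / (p + q)" and "0 < p * (v k - u k) / (p + q)"
      using k p q by simp_all
    then show "u k < w k" and "w k < v k"
      using w_u[of k] v_w[of k] by linarith+
  qed
  ultimately show "less_fun u w" and "less_fun w v"
    by (auto intro!: less_funI exI[of _ k])
qed

lemma less_eq_fun_between_prefix:
  fixes u v w :: "'a::linorder \<Rightarrow> 'b::linorder"
  assumes uv: "less_fun u v \<or> u = v" and vw: "less_fun v w \<or> v = w"
    and uw: "\<And>n. n \<le> N \<Longrightarrow> u n = w n" and "n \<le> N"
  shows "v n = u n"
proof -
  define trunc where "trunc f = (\<lambda>n. f (min n N))" for f :: "'a \<Rightarrow> 'b"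
  have mono: "less_fun (trunc f) (trunc g) \<or> trunc f = trunc g"
    if "less_fun f g \<or> f = g" for f g
    using that
  proof
    assume "less_fun f g"
    then obtain k where k: "f k < g k" and eq: "\<And>k'. k' < k \<Longrightarrow> f k' = g k'"
      by (blast elim!: less_funE)
    show ?thesis
    proof (cases "k \<le> N")
      case True
      then show ?thesis using k eq by (auto simp: trunc_def intro!: less_funI exI[of _ k])
    next
      case False
      then have "min n N < k" for n by (simp add: min.strict_coboundedI2)
      then show ?thesis using eq by (simp add: trunc_def)
    qed
  qed simp
  have "trunc w = trunc u" using uw by (auto simp: trunc_def)
  then have "less_fun (trunc u) (trunc v) \<or> trunc u = trunc v"
    and "less_fun (trunc v) (trunc u) \<or> trunc v = trunc u"
    using mono[OF uv] mono[OF vw] by simp_all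
  then have "trunc v = trunc u" by (metis less_fun_asym)
  then have "trunc v n = trunc u n" by simp
  with \<open>n \<le> N\<close> show ?thesis by (simp add: trunc_def)
qed

definition coord_order :: "('n::linorder \<times> 'n \<Rightarrow> nat \<Rightarrow> real) \<Rightarrow> 'n \<times> 'n \<Rightarrow> 'n \<times> 'n \<Rightarrow> bool" where
  "coord_order r s t \<longleftrightarrow>
     less_fun (r s) (r t) \<or> r s = r t \<and> (fst s < fst t \<or> fst s = fst t \<and> snd s < snd t)"

lemma coord_orderI:
  assumes "r s m < r t m" and "\<And>n. n < m \<Longrightarrow> r s n = r t n"
  shows "coord_order r s t"
  using assms unfolding coord_order_def by (blast intro: less_funI)

lemma reflection_order_coord_order:
  fixes r :: "'n::{finite,linorder} \<times> 'n \<Rightarrow> nat \<Rightarrow> real"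
  assumes convex: "\<And>a b c. a < b \<Longrightarrow> b < c \<Longrightarrow> \<exists>p q. 0 < p \<and> 0 < q \<and>
     r (a, c) = (\<lambda>n. (p * r (a, b) n + q * r (b, c) n) / (p + q))"
  shows "reflection_order (coord_order r)"
  unfolding reflection_order_def
proof (intro conjI ballI allI impI)
  fix t :: "'n \<times> 'n"
  show "\<not> coord_order r t t" by (simp add: coord_order_def less_fun_irrefl)
next
  fix t u v :: "'n \<times> 'n"
  assume "coord_order r t u" and "coord_order r u v"
  then show "coord_order r t v"
    unfolding coord_order_def by (elim disjE conjE) (auto intro: less_fun_trans)
next
  fix t u :: "'n \<times> 'n"
  assume "t \<noteq> u"
  then show "coord_order r t u \<or> coord_order r u t"
    using less_fun_trichotomy_wellorder[of "r t" "r u"]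
    unfolding coord_order_def by (metis linorder_neqE prod.expand)
next
  fix a b c :: 'n
  assume "a < b \<and> b < c"
  then obtain p q where p: "0 < p" and q: "0 < q"
    and ac: "r (a, c) = (\<lambda>n. (p * r (a, b) n + q * r (b, c) n) / (p + q))"
    using convex by blast
  consider (lt) "less_fun (r (a, b)) (r (b, c))" | (eq) "r (a, b) = r (b, c)"
    | (gt) "less_fun (r (b, c)) (r (a, b))"
    using less_fun_trichotomy_wellorder by blast
  then show "coord_order r (a, b) (a, c) \<and> coord_order r (a, c) (b, c) \<or>
             coord_order r (b, c) (a, c) \<and> coord_order r (a, c) (a, b)"
  proof cases
    case lt
    then show ?thesis
      using less_fun_convex_combination[OF lt p q] unfolding coord_order_def ac by blast
  next
    case eq
    have "r (a, c) = r (a, b)"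
      using p q unfolding ac eq by (simp add: fun_eq_iff field_simps add_pos_pos)
    then show ?thesis
      using eq \<open>a < b \<and> b < c\<close> unfolding coord_order_def by auto
  next
    case gt
    have "r (a, c) = (\<lambda>n. (q * r (b, c) n + p * r (a, b) n) / (q + p))"
      unfolding ac by (simp add: add.commute)
    then show ?thesis
      using less_fun_convex_combination[OF gt q p] unfolding coord_order_def by simp
  qed
qed

definition root_height :: "'n::{finite,linorder} \<times> 'n \<Rightarrow> real" where
  "root_height t = real (card {fst t..<snd t})"

lemma root_height_pos: "t \<in> transps \<Longrightarrow> 0 < root_height t"
  unfolding root_height_def transps_def by (auto simp: card_gt_0_iff)

lemma root_height_add:
  fixes a b c :: "'n::{finite,linorder}"
  assumes "a < b" and "b < c"
  shows "root_height (a, c) = root_height (a, b) + root_height (b, c)"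
proof -
  have "{a..<c} = {a..<b} \<union> {b..<c}" and "{a..<b} \<inter> {b..<c} = {}"
    using assms by auto
  then show ?thesis unfolding root_height_def by (simp add: card_Un_disjoint)
qed

lemma troot_add: "troot (a, c) = troot (a, b) + troot (b, c)"
  unfolding troot_def by simp

lemma reflection_order_ratio_coord_order:
  fixes F :: "nat \<Rightarrow> real ^ 'n::{finite,linorder} \<Rightarrow> real"
  assumes "\<And>n. linear (F n)"
  shows "reflection_order (coord_order (\<lambda>t n. F n (troot t) / root_height t))"
proof (rule reflection_order_coord_order)
  fix a b c :: 'n
  assume "a < b" and "b < c"
  let ?r = "\<lambda>t n. F n (troot t) / root_height t"
  define p q where "p = root_height (a, b)" and "q = root_height (b, c)"
  have "0 < p" and "0 < q"
    using \<open>a < b\<close> \<open>b < c\<close> root_height_pos unfolding p_def q_def transps_def by auto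
  moreover have "?r (a, c) n = (p * ?r (a, b) n + q * ?r (b, c) n) / (p + q)" for n
    using \<open>0 < p\<close> \<open>0 < q\<close> linear_add[OF assms]
    by (simp add: troot_add[of a c b] root_height_add[OF \<open>a < b\<close> \<open>b < c\<close>] p_def q_def)
  ultimately show "\<exists>p q. 0 < p \<and> 0 < q \<and> ?r (a, c) = (\<lambda>n. (p * ?r (a, b) n + q * ?r (b, c) n) / (p + q))"
    by blast
qed

lemma order_interval_coord_order:
  "order_interval (coord_order r) {t \<in> transps. \<forall>n\<le>N. r t n = 0}"
  unfolding order_interval_def
proof (intro ballI impI)
  fix x z y
  assume x: "x \<in> {t \<in> transps. \<forall>n\<le>N. r t n = 0}"
    and z: "z \<in> {t \<in> transps. \<forall>n\<le>N. r t n = 0}"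
    and "y \<in> transps" and "coord_order r x y" and "coord_order r y z"
  then have "r y n = r x n" if "n \<le> N" for n
    using less_eq_fun_between_prefix[of "r x" "r y" "r z" N n] that
    unfolding coord_order_def by auto
  then show "y \<in> {t \<in> transps. \<forall>n\<le>N. r t n = 0}"
    using x \<open>y \<in> transps\<close> by auto
qed

lemma troot_nth: "troot t $ x = (if x = fst t then 1 else 0) - (if x = snd t then 1 else 0)"
  unfolding troot_def by (simp add: axis_def)

lemma troot_inj_on_transps: "inj_on troot transps"
proof (rule inj_onI)
  fix s t :: "'n::{finite,linorder} \<times> 'n"
  assume "s \<in> transps" "t \<in> transps" and eq: "troot s = troot t"
  then have s: "fst s < snd s" and t: "fst t < snd t" unfolding transps_def by auto
  have "troot s $ fst s = troot t $ fst s" and "troot s $ snd s = troot t $ snd s"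
    using eq by auto
  then have "fst s = fst t" and "snd s = snd t"
    using s t unfolding troot_nth by (auto split: if_splits)
  then show "s = t" by (simp add: prod_eq_iff)
qed

lemma linear_functional_on_independent_family:
  fixes v :: "'i \<Rightarrow> 'a::real_vector"
  assumes "independent (v ` J)" and "inj_on v J"
  obtains f :: "'a \<Rightarrow> real" where "linear f" and "\<And>j. j \<in> J \<Longrightarrow> f (v j) = c j"
proof -
  obtain f :: "'a \<Rightarrow> real" where lin: "linear f" and f: "\<forall>x\<in>v ` J. f x = c (inv_into J v x)"
    using linear_independent_extend[OF assms(1), of "\<lambda>x. c (inv_into J v x)"] by blast
  have "f (v j) = c j" if "j \<in> J" for j
    using f that inv_into_f_f[OF assms(2) that] by simp
  with lin show ?thesis by (rule that)
qed

lemma linear_functional_vanishing_on_span: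
  fixes x :: "'a::real_vector"
  assumes "x \<notin> span S"
  shows "\<exists>f :: 'a \<Rightarrow> real. linear f \<and> f x = 1 \<and> (\<forall>w\<in>span S. f w = 0)"
proof -
  obtain B where B: "B \<subseteq> span S" "independent B" "span S \<subseteq> span B"
    by (rule maximal_independent_subset)
  have "span B \<subseteq> span S"
    using span_minimal[OF B(1) subspace_span] .
  then have "x \<notin> span B" using assms by blast
  then have "independent (insert x B)" and "x \<notin> B"
    using independent_insertI[OF _ B(2)] span_base by blast+
  then obtain f :: "'a \<Rightarrow> real" where lin: "linear f"
    and f: "\<forall>y\<in>insert x B. f y = (if y = x then 1 else 0)"
    using linear_independent_extend[of "insert x B" "\<lambda>y. if y = x then 1 else 0"] by blast
  have "f y = 0" if "y \<in> B" for y
    using f \<open>x \<notin> B\<close> that by auto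
  then have "f w = 0" if "w \<in> span S" for w
    using linear_eq_0_on_span[OF lin] B(3) that by blast
  with lin f show ?thesis by auto
qed

lemma finite_functionals_detecting_span:
  fixes X :: "'a::real_vector set"
  assumes "finite X"
  obtains \<phi> :: "nat \<Rightarrow> 'a \<Rightarrow> real" and N where "\<And>m. linear (\<phi> m)"
    and "\<And>m w. w \<in> span S \<Longrightarrow> \<phi> m w = 0"
    and "\<And>x. x \<in> X \<Longrightarrow> x \<notin> span S \<Longrightarrow> \<exists>m<N. \<phi> m x \<noteq> 0"
proof -
  have "\<forall>x. \<exists>f :: 'a \<Rightarrow> real. linear f \<and> (\<forall>w\<in>span S. f w = 0) \<and> (x \<notin> span S \<longrightarrow> f x = 1)"
  proof
    fix x
    show "\<exists>f :: 'a \<Rightarrow> real. linear f \<and> (\<forall>w\<in>span S. f w = 0) \<and> (x \<notin> span S \<longrightarrow> f x = 1)"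
    proof (cases "x \<in> span S")
      case True
      then show ?thesis by (intro exI[of _ "\<lambda>_. 0"]) (simp add: linear_zero)
    next
      case False
      then show ?thesis
        using linear_functional_vanishing_on_span by blast
    qed
  qed
  from choice[OF this] obtain \<psi> :: "'a \<Rightarrow> 'a \<Rightarrow> real" where
    \<psi>: "\<forall>x. linear (\<psi> x) \<and> (\<forall>w\<in>span S. \<psi> x w = 0) \<and> (x \<notin> span S \<longrightarrow> \<psi> x x = 1)"
    by blast
  have \<psi>_lin: "linear (\<psi> x)" for x
    using \<psi> by blast
  have \<psi>_span: "\<psi> x w = 0" if "w \<in> span S" for x w
    using \<psi> that by blast
  have \<psi>_self: "\<psi> x x = 1" if "x \<notin> span S" for x
    using \<psi> that by blast
  obtain xs where xs: "set xs = X"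
    using finite_list[OF assms] by blast
  show ?thesis
  proof (rule that[of "\<lambda>m. \<psi> (xs ! m)" "length xs"])
    fix x assume "x \<in> X" and "x \<notin> span S"
    then obtain m where "m < length xs" and "xs ! m = x"
      using xs by (auto simp: in_set_conv_nth)
    then show "\<exists>m<length xs. \<psi> (xs ! m) x \<noteq> 0"
      using \<psi>_self[OF \<open>x \<notin> span S\<close>] by auto
  qed (simp_all add: \<psi>_lin \<psi>_span)
qed

lemma ex_flag_adapted_functionals:
  fixes v :: "'i \<Rightarrow> 'a::real_vector"
  assumes "independent (v ` J)" and "inj_on v J" and "I \<subseteq> J" and "finite X"
  obtains F :: "nat \<Rightarrow> 'a \<Rightarrow> real" and N where
    "\<And>n. linear (F n)"
    "\<And>n w. n \<le> N \<Longrightarrow> w \<in> span (v ` I) \<Longrightarrow> F n w = 0"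
    "\<And>x. x \<in> X \<Longrightarrow> x \<notin> span (v ` I) \<Longrightarrow> \<exists>n\<le>N. F n x \<noteq> 0"
    "\<And>j. j \<in> J \<Longrightarrow> F 0 (v j) = (if j \<in> I then 0 else a j)"
    "\<And>j. j \<in> J \<Longrightarrow> F (Suc N) (v j) = a j"
proof -
  obtain f0 :: "'a \<Rightarrow> real"
    where f0: "linear f0" "\<And>j. j \<in> J \<Longrightarrow> f0 (v j) = (if j \<in> I then 0 else a j)"
    using linear_functional_on_independent_family[OF assms(1,2), of "\<lambda>j. if j \<in> I then 0 else a j"]
    by blast
  obtain f1 :: "'a \<Rightarrow> real" where f1: "linear f1" "\<And>j. j \<in> J \<Longrightarrow> f1 (v j) = a j"
    using linear_functional_on_independent_family[OF assms(1,2), of a] by blast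
  obtain \<phi> :: "nat \<Rightarrow> 'a \<Rightarrow> real" and N :: nat
    where \<phi>: "\<And>m. linear (\<phi> m)" "\<And>m w. w \<in> span (v ` I) \<Longrightarrow> \<phi> m w = 0"
      "\<And>x. x \<in> X \<Longrightarrow> x \<notin> span (v ` I) \<Longrightarrow> \<exists>m<N. \<phi> m x \<noteq> 0"
    using finite_functionals_detecting_span[OF assms(4), of "v ` I"] by blast
  define F where "F n = (case n of 0 \<Rightarrow> f0 | Suc m \<Rightarrow> if m < N then \<phi> m else f1)" for n
  have lin: "linear (F n)" for n
    by (cases n) (simp_all add: F_def f0(1) f1(1) \<phi>(1))
  have "f0 y = 0" if "y \<in> v ` I" for y
    using that f0(2) assms(3) by auto
  then have f0_span: "f0 w = 0" if "w \<in> span (v ` I)" for w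
    using linear_eq_0_on_span[OF f0(1)] that by blast
  have vanish: "F n w = 0" if "n \<le> N" and "w \<in> span (v ` I)" for n w
  proof (cases n)
    case 0
    then show ?thesis using f0_span[OF that(2)] by (simp add: F_def)
  next
    case (Suc m)
    then show ?thesis using that \<phi>(2) by (simp add: F_def)
  qed
  have detect: "\<exists>n\<le>N. F n x \<noteq> 0" if x: "x \<in> X" "x \<notin> span (v ` I)" for x
  proof -
    obtain m where "m < N" and "\<phi> m x \<noteq> 0"
      using \<phi>(3)[OF x] by blast
    then show ?thesis by (intro exI[of _ "Suc m"]) (simp add: F_def)
  qed
  show ?thesis
    by (rule that[OF lin vanish detect]) (simp_all add: F_def f0(2) f1(2))
qed

lemma linear_pos_on_nonneg_combination:
  fixes f :: "'a::real_vector \<Rightarrow> real"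
  assumes "linear f" and "finite J"
    and x: "x = (\<Sum>j\<in>J. c j *\<^sub>R v j)"
    and zero: "\<And>j. j \<in> I \<Longrightarrow> f (v j) = 0"
    and pos: "\<And>j. j \<in> J - I \<Longrightarrow> 0 < f (v j)"
    and nonneg: "\<And>j. j \<in> J - I \<Longrightarrow> 0 \<le> c j"
    and "x \<notin> span (v ` I)"
  shows "0 < f x"
proof (rule ccontr)
  assume "\<not> 0 < f x"
  have fx: "f x = (\<Sum>j\<in>J. c j * f (v j))"
    unfolding x by (simp add: linear_sum[OF assms(1)] linear_scale[OF assms(1)])
  have terms: "0 \<le> c j * f (v j)" if "j \<in> J" for j
    using that zero[of j] pos[of j] nonneg[of j] by (cases "j \<in> I") auto
  have "0 \<le> f x"
    unfolding fx by (rule sum_nonneg) (rule terms)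
  then have "f x = 0"
    using \<open>\<not> 0 < f x\<close> by linarith
  then have zero_terms: "c j * f (v j) = 0" if "j \<in> J" for j
    using sum_nonneg_eq_0_iff[OF \<open>finite J\<close>, of "\<lambda>j. c j * f (v j)"] terms fx that by simp
  have "c j *\<^sub>R v j \<in> span (v ` I)" if "j \<in> J" for j
  proof (cases "j \<in> I")
    case True
    then show ?thesis by (intro span_scale span_base imageI)
  next
    case False
    then have "c j = 0" using zero_terms[OF that] pos[of j] that by simp
    then show ?thesis by (simp add: span_zero)
  qed
  then have "x \<in> span (v ` I)"
    unfolding x by (rule span_sum)
  with assms(7) show False ..
qed

lemma inj_on_troot_comp:
  assumes "inj_on ts A" and "ts ` A \<subseteq> transps"
  shows "inj_on (\<lambda>j. troot (ts j)) A"
  using comp_inj_on[OF assms(1) inj_on_subset[OF troot_inj_on_transps assms(2)]]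
  by (simp add: o_def)

lemma ex_flag_coordinates:
  fixes ts :: "nat \<Rightarrow> ('n::{finite,linorder} \<times> 'n)"
  assumes ts_T: "\<forall>j\<in>{1..k}. ts j \<in> transps" and ts_inj: "inj_on ts {1..k}"
    and indep: "independent (troot ` ts ` {1..k})" and "i \<le> k"
  defines "V \<equiv> span (troot ` ts ` {1..i})"
  obtains r :: "'n \<times> 'n \<Rightarrow> nat \<Rightarrow> real" and N where
    "reflection_order (coord_order r)"
    "\<And>t. t \<in> transps \<Longrightarrow> troot t \<in> V \<longleftrightarrow> (\<forall>n\<le>N. r t n = 0)"
    "\<And>j. j \<in> {1..k} \<Longrightarrow> r (ts j) 0 = (if j \<le> i then 0 else real j)"
    "\<And>j. j \<in> {1..k} \<Longrightarrow> r (ts j) (Suc N) = real j"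
    "\<And>t c. t \<in> transps \<Longrightarrow> troot t \<notin> V \<Longrightarrow> troot t = (\<Sum>j=1..k. c j *\<^sub>R troot (ts j)) \<Longrightarrow>
      \<forall>j\<in>{i+1..k}. 0 \<le> c j \<Longrightarrow> 0 < r t 0"
proof -
  let ?v = "\<lambda>j. troot (ts j)"
  have images: "troot ` ts ` A = ?v ` A" for A
    by (rule image_image)
  have inj: "inj_on ?v {1..k}"
    using inj_on_troot_comp[OF ts_inj] ts_T by blast
  have indep': "independent (?v ` {1..k})"
    using indep unfolding images .
  have flag: "{1..i} \<subseteq> {1..k}"
    using \<open>i \<le> k\<close> by auto
  have finite_roots: "finite (troot ` transps)"
    by simp
  obtain F :: "nat \<Rightarrow> real ^ 'n::{finite,linorder} \<Rightarrow> real" and N where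
    lin: "\<And>n. linear (F n)"
    and vanish: "\<And>n w. n \<le> N \<Longrightarrow> w \<in> V \<Longrightarrow> F n w = 0"
    and detect: "\<And>x. x \<in> troot ` transps \<Longrightarrow> x \<notin> V \<Longrightarrow> \<exists>n\<le>N. F n x \<noteq> 0"
    and first: "\<And>j. j \<in> {1..k} \<Longrightarrow>
      F 0 (?v j) = (if j \<in> {1..i} then 0 else real j * root_height (ts j))"
    and last: "\<And>j. j \<in> {1..k} \<Longrightarrow> F (Suc N) (?v j) = real j * root_height (ts j)"
    using ex_flag_adapted_functionals[OF indep' inj flag finite_roots,
        of "\<lambda>j. real j * root_height (ts j)"]
    unfolding V_def images by blast
  define r where "r t n = F n (troot t) / root_height t" for t n
  have ht: "0 < root_height (ts j)" if "j \<in> {1..k}" for j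
    using root_height_pos ts_T that by blast
  have "0 < F 0 (troot t)"
    if t: "t \<in> transps" "troot t \<notin> V" "troot t = (\<Sum>j=1..k. c j *\<^sub>R ?v j)"
      and c: "\<forall>j\<in>{i+1..k}. 0 \<le> c j" for t c
  proof (rule linear_pos_on_nonneg_combination[OF lin finite_atLeastAtMost t(3)])
    show "F 0 (?v j) = 0" if "j \<in> {1..i}" for j
      using first that flag by auto
    show "0 < F 0 (?v j)" and "0 \<le> c j" if "j \<in> {1..k} - {1..i}" for j
      using first[of j] ht[of j] c that by auto
    from t(2) show "troot t \<notin> span (?v ` {1..i})"
      unfolding V_def images .
  qed
  then have "0 < r t 0"
    if "t \<in> transps" "troot t \<notin> V" "troot t = (\<Sum>j=1..k. c j *\<^sub>R ?v j)"
      "\<forall>j\<in>{i+1..k}. 0 \<le> c j" for t c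
    using that root_height_pos[OF that(1)] by (simp add: r_def)
  moreover have "reflection_order (coord_order r)"
    unfolding r_def by (rule reflection_order_ratio_coord_order[OF lin])
  moreover have "troot t \<in> V \<longleftrightarrow> (\<forall>n\<le>N. r t n = 0)" if "t \<in> transps" for t
    using vanish detect[of "troot t"] root_height_pos[OF that] that by (auto simp: r_def)
  moreover have "r (ts j) 0 = (if j \<le> i then 0 else real j)" and "r (ts j) (Suc N) = real j"
    if "j \<in> {1..k}" for j
    using first[OF that] last[OF that] ht[OF that] that by (simp_all add: r_def)
  ultimately show ?thesis
    using that by blast
qed

theorem lemma4p5:
  fixes ts :: "nat \<Rightarrow> ('n::{finite,linorder} \<times> 'n)" and k i :: nat
  assumes ts_T: "\<forall>j\<in>{1..k}. ts j \<in> transps"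
    and ts_inj: "inj_on ts {1..k}"
    and indep: "independent (troot ` ts ` {1..k})"
    and i_ge: "1 \<le> i" and i_le: "i \<le> k"
  shows "\<exists>R. reflection_order R \<and>
     (\<forall>j\<in>{1..k}. \<forall>j'\<in>{1..k}. j < j' \<longrightarrow> R (ts j) (ts j')) \<and>
     order_interval R {t \<in> transps. troot t \<in> span (troot ` ts ` {1..i})} \<and>
     (\<forall>t\<in>transps. \<forall>t'\<in>transps.
        troot t \<in> span (troot ` ts ` {1..i}) \<longrightarrow>
        troot t' \<in> span (troot ` ts ` {1..k}) - span (troot ` ts ` {1..i}) \<longrightarrow>
        (\<forall>c :: nat \<Rightarrow> real.
           troot t' = (\<Sum>j=1..k. c j *\<^sub>R troot (ts j)) \<longrightarrow>
           (\<forall>j\<in>{i+1..k}. 0 \<le> c j) \<longrightarrow> R t t'))"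
proof -
  let ?V = "span (troot ` ts ` {1..i})"
  obtain r N where refl: "reflection_order (coord_order r)"
    and V_iff: "\<And>t. t \<in> transps \<Longrightarrow> troot t \<in> ?V \<longleftrightarrow> (\<forall>n\<le>N. r t n = 0)"
    and r_first: "\<And>j. j \<in> {1..k} \<Longrightarrow> r (ts j) 0 = (if j \<le> i then 0 else real j)"
    and r_last: "\<And>j. j \<in> {1..k} \<Longrightarrow> r (ts j) (Suc N) = real j"
    and r_pos: "\<And>t c. t \<in> transps \<Longrightarrow> troot t \<notin> ?V \<Longrightarrow>
      troot t = (\<Sum>j=1..k. c j *\<^sub>R troot (ts j)) \<Longrightarrow> \<forall>j\<in>{i+1..k}. 0 \<le> c j \<Longrightarrow> 0 < r t 0"
    using ex_flag_coordinates[OF ts_T ts_inj indep i_le] by blast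
  have chain: "coord_order r (ts j) (ts j')"
    if j: "j \<in> {1..k}" and j': "j' \<in> {1..k}" and "j < j'" for j j'
  proof (cases "i < j'")
    case True
    then show ?thesis
      using r_first[OF j] r_first[OF j'] \<open>j < j'\<close> by (intro coord_orderI[of r _ 0]) auto
  next
    case False
    then have "troot (ts j) \<in> ?V" and "troot (ts j') \<in> ?V"
      using j j' \<open>j < j'\<close> by (auto intro!: span_base)
    then have "r (ts j) n = r (ts j') n" if "n < Suc N" for n
      using V_iff ts_T j j' that by auto
    then show ?thesis
      using r_last[OF j] r_last[OF j'] \<open>j < j'\<close> by (intro coord_orderI[of r _ "Suc N"]) auto
  qed
  have "{t \<in> transps. troot t \<in> ?V} = {t \<in> transps. \<forall>n\<le>N. r t n = 0}"
    using V_iff by blast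
  then have interval: "order_interval (coord_order r) {t \<in> transps. troot t \<in> ?V}"
    by (simp only: order_interval_coord_order)
  have "coord_order r t t'"
    if "t \<in> transps" "troot t \<in> ?V" "t' \<in> transps" "troot t' \<notin> ?V"
      "troot t' = (\<Sum>j=1..k. c j *\<^sub>R troot (ts j))" "\<forall>j\<in>{i+1..k}. 0 \<le> c j" for t t' c
    using V_iff[of t] r_pos[of t' c] that by (intro coord_orderI[of r _ 0]) auto
  with refl chain interval show ?thesis
    by (intro exI[of _ "coord_order r"]) blast
qed

end
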